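(* Let $C$ be a circle graph and $K\subseteq V(C)$ an independent set such that $K$ contains at least one vertex of degree at least $2$ in $C$ and no two vertices of $K$ are twins in $C$. Then there exist distinct vertices $a,b\in V(C)\setminus K$ such that $|N_C(a)\cap N_C(b)\cap K|=1$.
   Context: Graphs are finite, simple, undirected. A circle graph is a graph isomorphic to the intersection graph of a finite set of chords of a circle (vertices are chords, two vertices adjacent iff the chords intersect). $N_C(u)$ denotes the neighbourhood of $u$. A set is independent if no two of its vertices are adjacent. Two vertices $u,v$ are twins if $N_C(u)\setminus\{v\}=N_C(v)\setminus\{u\}$. *)

theory Defs
  imports "HOL-Analysis.Analysis"
begin

definition simple_graph :: "'a set \<Rightarrow> ('a \<Rightarrow> 'a \<Rightarrow> bool) \<Rightarrow> bool" where
  "simple_graph V E \<longleftrightarrow> finite V \<and> (\<forall>u v. E u v \<longrightarrow> u \<in> V \<and> v \<in> V)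
     \<and> (\<forall>u v. E u v \<longrightarrow> E v u) \<and> (\<forall>u. \<not> E u u)"

definition nbhd :: "'a set \<Rightarrow> ('a \<Rightarrow> 'a \<Rightarrow> bool) \<Rightarrow> 'a \<Rightarrow> 'a set" where
  "nbhd V E u = {v \<in> V. E u v}"

definition independent :: "('a \<Rightarrow> 'a \<Rightarrow> bool) \<Rightarrow> 'a set \<Rightarrow> bool" where
  "independent E K \<longleftrightarrow> (\<forall>u\<in>K. \<forall>v\<in>K. \<not> E u v)"

definition twins :: "'a set \<Rightarrow> ('a \<Rightarrow> 'a \<Rightarrow> bool) \<Rightarrow> 'a \<Rightarrow> 'a \<Rightarrow> bool" where
  "twins V E u v \<longleftrightarrow> nbhd V E u - {v} = nbhd V E v - {u}"

definition chord :: "complex \<times> complex \<Rightarrow> complex set" where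
  "chord p = closed_segment (fst p) (snd p)"

definition circle_graph :: "'a set \<Rightarrow> ('a \<Rightarrow> 'a \<Rightarrow> bool) \<Rightarrow> bool" where
  "circle_graph V E \<longleftrightarrow> simple_graph V E \<and>
     (\<exists>(c::complex) (r::real) (f :: 'a \<Rightarrow> complex \<times> complex). r > 0 \<and>
        (\<forall>v\<in>V. fst (f v) \<in> sphere c r \<and> snd (f v) \<in> sphere c r \<and> fst (f v) \<noteq> snd (f v)) \<and>
        inj_on (\<lambda>v. chord (f v)) V \<and>
        (\<forall>u\<in>V. \<forall>v\<in>V. u \<noteq> v \<longrightarrow> (E u v \<longleftrightarrow> chord (f u) \<inter> chord (f v) \<noteq> {})))"

end

theory Submission
  imports Defs
begin

text \<open>Call \<open>N(x) \<inter> K\<close> the trace of a vertex \<open>x\<close>. Among the pairs of distinct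
  vertices outside \<open>K\<close> with a nonempty common trace (they exist, as some vertex of \<open>K\<close> has two
  neighbours), take one, \<open>a, b\<close>, whose common trace \<open>I\<close> is smallest. If \<open>I\<close> contained
  distinct \<open>e, f\<close>, a vertex \<open>x\<close> adjacent to \<open>e\<close> but not to \<open>f\<close> would exist because \<open>e, f\<close>
  are not twins, and \<open>x \<notin> K\<close>. The circle representation forces the common trace of \<open>x\<close> with
  \<open>a\<close> or with \<open>b\<close> to lie inside \<open>I\<close>; it contains \<open>e\<close> but not \<open>f\<close>, contradicting minimality.

  Indeed, otherwise there are \<open>g \<in> N(a) \<inter> N(x) - N(b)\<close> and \<open>h \<in> N(b) \<inter> N(x) - N(a)\<close> in \<open>K\<close>, so the
  pairwise disjoint chords \<open>e, f, g, h\<close> are crossed by \<open>a\<close> (all but \<open>h\<close>), \<open>b\<close> (all but \<open>g\<close>)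
  and \<open>x\<close> (all but \<open>f\<close>). A chord crossing three disjoint chords meets them in some order
  along itself, and the middle one separates the other two; every chord crossing both of those
  must then cross it too. The missing crossings force \<open>e\<close> to separate each of the pairs
  \<open>f g\<close>, \<open>g h\<close>, \<open>f h\<close>, which is impossible with only two sides.\<close>

text \<open>The cross product of \<open>snd k - fst k\<close> and \<open>z - fst k\<close>: positive iff \<open>z\<close> lies strictly
  to the left of the line from \<open>fst k\<close> to \<open>snd k\<close>.\<close>
definition orient :: "complex \<times> complex \<Rightarrow> complex \<Rightarrow> real" where
  "orient k z = Im (cnj (snd k - fst k) * (z - fst k))"

definition on_circle :: "complex \<Rightarrow> real \<Rightarrow> complex \<times> complex \<Rightarrow> bool" where
  "on_circle c r k \<longleftrightarrow> fst k \<in> sphere c r \<and> snd k \<in> sphere c r \<and> fst k \<noteq> snd k"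

definition crossing :: "complex \<times> complex \<Rightarrow> complex \<times> complex \<Rightarrow> bool" where
  "crossing u v \<longleftrightarrow> chord u \<inter> chord v \<noteq> {}"

definition left_of :: "complex \<times> complex \<Rightarrow> complex \<times> complex \<Rightarrow> bool" where
  "left_of k x \<longleftrightarrow> (\<forall>z\<in>chord x. orient k z > 0)"

definition right_of :: "complex \<times> complex \<Rightarrow> complex \<times> complex \<Rightarrow> bool" where
  "right_of k x \<longleftrightarrow> (\<forall>z\<in>chord x. orient k z < 0)"

definition separates :: "complex \<times> complex \<Rightarrow> complex \<times> complex \<Rightarrow> complex \<times> complex \<Rightarrow> bool" where
  "separates k u v \<longleftrightarrow> left_of k u \<and> right_of k v \<or> right_of k u \<and> left_of k v"

lemma crossing_commute: "crossing u v \<longleftrightarrow> crossing v u"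
  unfolding crossing_def by blast

lemma separates_commute: "separates k u v \<longleftrightarrow> separates k v u"
  unfolding separates_def by blast

lemma not_left_of_and_right_of: "\<not> (left_of k x \<and> right_of k x)"
  unfolding left_of_def right_of_def chord_def
  using ends_in_segment(1) by fastforce

lemma orient_affine: "orient k ((1 - t) *\<^sub>R p + t *\<^sub>R q) = (1 - t) * orient k p + t * orient k q"
  unfolding orient_def scaleR_conv_of_real by (simp add: algebra_simps)

lemma orient_eq_0_if_mem_chord:
  assumes "z \<in> chord k"
  shows "orient k z = 0"
proof -
  obtain t where "z = (1 - t) *\<^sub>R fst k + t *\<^sub>R snd k"
    using assms unfolding chord_def closed_segment_def by blast
  moreover have "orient k (fst k) = 0" "orient k (snd k) = 0"
    unfolding orient_def by (simp_all add: algebra_simps)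
  ultimately show ?thesis
    by (simp add: orient_affine)
qed

lemma continuous_on_orient: "continuous_on S (orient k)"
  unfolding orient_def by (intro continuous_intros)

lemma chord_subset_cball: "on_circle c r k \<Longrightarrow> chord k \<subseteq> cball c r"
  unfolding on_circle_def chord_def
  by (meson closed_segment_subset convex_cball sphere_cball subsetD)

lemma collinear_if_orient_eq_0:
  assumes "fst k \<noteq> snd k" "orient k z = 0"
  shows "collinear {fst k, snd k, z}"
proof -
  define d where "d = snd k - fst k"
  define w where "w = cnj d * (z - fst k)"
  have "d \<noteq> 0" using assms(1) unfolding d_def by simp
  have "w = of_real (Re w)"
    using assms(2) unfolding orient_def w_def d_def by (simp add: complex_eq_iff)
  moreover have "d * w = of_real ((cmod d)\<^sup>2) * (z - fst k)"
    unfolding w_def complex_norm_square by (simp add: algebra_simps)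
  ultimately have "z = fst k + (Re w / (cmod d)\<^sup>2) *\<^sub>R d"
    using \<open>d \<noteq> 0\<close> unfolding scaleR_conv_of_real
    by (simp add: mult.commute)
  then show ?thesis
    unfolding collinear_alt d_def
    by (intro exI[of _ "fst k"] exI[of _ d]) (auto simp: d_def intro: exI[of _ 0] exI[of _ 1])
qed

lemma mem_chord_if_orient_eq_0:
  assumes k: "on_circle c r k" and z: "z \<in> cball c r" "orient k z = 0"
  shows "z \<in> chord k"
proof -
  have endpoint_not_inside: False
    if "between (q, z) p" "p \<noteq> q" "p \<noteq> z" "dist c p = r" "dist c q = r" for p q
  proof -
    have "p \<in> open_segment q z"
      using that by (simp add: open_segment_def between_mem_segment)
    then show False
      using dist_decreases_open_segment[of p q z c] that z(1) by auto
  qed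
  have "collinear {fst k, snd k, z}"
    using k z(2) collinear_if_orient_eq_0 unfolding on_circle_def by blast
  then consider "between (snd k, z) (fst k)" | "between (z, fst k) (snd k)"
    | "between (fst k, snd k) z"
    using collinear_between_cases by blast
  then show ?thesis
  proof cases
    case 1
    then show ?thesis
      using k endpoint_not_inside[where p = "fst k" and q = "snd k"]
      unfolding on_circle_def chord_def by (auto simp: between_mem_segment)
  next
    case 2
    then show ?thesis
      using k endpoint_not_inside[where p = "snd k" and q = "fst k"]
        closed_segment_commute[of z "fst k"]
      unfolding on_circle_def chord_def by (force simp: between_mem_segment)
  next
    case 3
    then show ?thesis
      unfolding chord_def using between_mem_segment[of "fst k" "snd k" z] by simp
  qed
qed

lemma crossing_if_orient_changes_sign:
  assumes k: "on_circle c r k" and x: "on_circle c r x"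
    and p: "p \<in> chord x" "orient k p \<le> 0" and q: "q \<in> chord x" "0 \<le> orient k q"
  shows "crossing x k"
proof -
  have "0 \<in> closed_segment (orient k p) (orient k q)"
    using p(2) q(2) by (simp add: closed_segment_eq_real_ivl)
  then have "0 \<in> orient k ` closed_segment p q"
    using subset_continuous_image_segment_1[OF continuous_on_orient] by blast
  then obtain w where w: "w \<in> closed_segment p q" "orient k w = 0"
    by auto
  have "closed_segment p q \<subseteq> chord x"
    using p(1) q(1) unfolding chord_def by (simp add: closed_segment_subset)
  with w(1) have "w \<in> chord x" by blast
  moreover have "w \<in> chord k"
    using mem_chord_if_orient_eq_0[OF k _ w(2)] chord_subset_cball[OF x] \<open>w \<in> chord x\<close> by blast
  ultimately show ?thesis
    unfolding crossing_def by blast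
qed

lemma left_of_or_right_of:
  assumes "on_circle c r k" "on_circle c r x" "\<not> crossing x k"
  shows "left_of k x \<or> right_of k x"
  using assms crossing_if_orient_changes_sign[of c r k x]
  unfolding left_of_def right_of_def by (meson not_le)

lemma crossing_if_separates:
  assumes "on_circle c r k" "on_circle c r x" "separates k u v" "crossing x u" "crossing x v"
  shows "crossing x k"
proof -
  obtain p q where "p \<in> chord x" "p \<in> chord u" "q \<in> chord x" "q \<in> chord v"
    using assms(4,5) unfolding crossing_def by blast
  then show ?thesis
    using assms(3) crossing_if_orient_changes_sign[OF assms(1,2)]
    unfolding separates_def left_of_def right_of_def by (meson less_imp_le)
qed

lemma separates_if_between:
  assumes on: "on_circle c r k" "on_circle c r u" "on_circle c r v"
    and "\<not> crossing u k" "\<not> crossing v k"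
    and "p \<in> chord u" "q \<in> chord v" "z \<in> closed_segment p q" "z \<in> chord k"
  shows "separates k u v"
proof -
  obtain t where t: "0 \<le> t" "t \<le> 1" "z = (1 - t) *\<^sub>R p + t *\<^sub>R q"
    using assms(8) unfolding closed_segment_def by blast
  have "(1 - t) * orient k p + t * orient k q = 0"
    using orient_eq_0_if_mem_chord[OF assms(9)] t(3) by (simp add: orient_affine)
  then have "\<not> (orient k p > 0 \<and> orient k q > 0)" "\<not> (orient k p < 0 \<and> orient k q < 0)"
    using t(1,2) convex_bound_lt[of "orient k p" 0 "orient k q" "1 - t" t]
      convex_bound_lt[of "- orient k p" 0 "- orient k q" "1 - t" t] by auto
  then show ?thesis
    using left_of_or_right_of[OF on(1,2) assms(4)] left_of_or_right_of[OF on(1,3) assms(5)] assms(6,7)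
    unfolding separates_def left_of_def right_of_def by blast
qed

lemma one_separates_if_common_crossing:
  assumes on: "on_circle c r e" "on_circle c r f" "on_circle c r g"
    and "\<not> crossing e f" "\<not> crossing e g" "\<not> crossing f g"
    and "crossing x e" "crossing x f" "crossing x g"
  shows "separates e f g \<or> separates f e g \<or> separates g e f"
proof -
  obtain pe pf pg where "pe \<in> chord x" "pf \<in> chord x" "pg \<in> chord x"
    and p: "pe \<in> chord e" "pf \<in> chord f" "pg \<in> chord g"
    using assms(7-9) unfolding crossing_def by blast
  then have "collinear {pe, pf, pg}"
    unfolding chord_def by (meson collinear_closed_segment collinear_subset empty_subsetI insert_subset)
  then consider "pe \<in> closed_segment pf pg" | "pf \<in> closed_segment pg pe" | "pg \<in> closed_segment pe pf"
    by (auto simp: collinear_between_cases between_mem_segment)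
  then show ?thesis
  proof cases
    case 1
    then have "separates e f g"
      using separates_if_between[OF on(1,2,3)] assms(4,5) p by (simp add: crossing_commute)
    then show ?thesis ..
  next
    case 2
    then have "separates f g e"
      using separates_if_between[OF on(2,3,1)] assms(4,6) p by (simp add: crossing_commute)
    then show ?thesis
      by (simp add: separates_commute)
  next
    case 3
    then have "separates g e f"
      using separates_if_between[OF on(3,1,2)] assms(5,6) p by (simp add: crossing_commute)
    then show ?thesis by blast
  qed
qed

lemma four_chords_obstruction:
  assumes on: "on_circle c r e" "on_circle c r f" "on_circle c r g" "on_circle c r h"
      "on_circle c r a" "on_circle c r b" "on_circle c r x"
    and disjoint: "\<not> crossing e f" "\<not> crossing e g" "\<not> crossing e h"
      "\<not> crossing f g" "\<not> crossing f h" "\<not> crossing g h"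
    and a: "crossing a e" "crossing a f" "crossing a g" "\<not> crossing a h"
    and b: "crossing b e" "crossing b f" "crossing b h" "\<not> crossing b g"
    and x: "crossing x e" "crossing x g" "crossing x h" "\<not> crossing x f"
  shows False
proof -
  have "separates e g h"
    using one_separates_if_common_crossing[OF on(1,3,4) disjoint(2,3,6) x(1-3)]
      crossing_if_separates[OF on(3,6), of e h] crossing_if_separates[OF on(4,5), of e g] a b
    by (auto simp: separates_commute)
  moreover have "separates e f g"
    using one_separates_if_common_crossing[OF on(1,2,3) disjoint(1,2,4) a(1-3)]
      crossing_if_separates[OF on(2,7), of e g] crossing_if_separates[OF on(3,6), of e f] b x
    by (auto simp: separates_commute)
  moreover have "separates e f h"
    using one_separates_if_common_crossing[OF on(1,2,4) disjoint(1,3,5) b(1-3)]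
      crossing_if_separates[OF on(2,7), of e h] crossing_if_separates[OF on(4,5), of e f] a x
    by (auto simp: separates_commute)
  ultimately show False
    using not_left_of_and_right_of[of e f] not_left_of_and_right_of[of e g]
      not_left_of_and_right_of[of e h]
    unfolding separates_def by blast
qed

lemma circle_graph_chord_model:
  assumes "circle_graph V E"
  obtains c r \<phi> where "\<And>v. v \<in> V \<Longrightarrow> on_circle c r (\<phi> v)"
    and "\<And>u v. E u v \<Longrightarrow> crossing (\<phi> u) (\<phi> v)"
    and "\<And>u v. u \<in> V \<Longrightarrow> v \<in> V \<Longrightarrow> u \<noteq> v \<Longrightarrow> \<not> E u v \<Longrightarrow> \<not> crossing (\<phi> u) (\<phi> v)"
proof -
  obtain c r \<phi> where
      "\<forall>v\<in>V. fst (\<phi> v) \<in> sphere c r \<and> snd (\<phi> v) \<in> sphere c r \<and> fst (\<phi> v) \<noteq> snd (\<phi> v)"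
    and "\<forall>u\<in>V. \<forall>v\<in>V. u \<noteq> v \<longrightarrow> (E u v \<longleftrightarrow> chord (\<phi> u) \<inter> chord (\<phi> v) \<noteq> {})"
    using assms unfolding circle_graph_def by blast
  moreover have "u \<in> V" "v \<in> V" "u \<noteq> v" if "E u v" for u v
    using assms that unfolding circle_graph_def simple_graph_def by metis+
  ultimately show ?thesis
    using that unfolding on_circle_def crossing_def by metis
qed

lemma circle_graph_nested_traces:
  assumes G: "circle_graph V E" and K: "K \<subseteq> V" "independent E K"
    and abx: "a \<in> V - K" "b \<in> V - K" "x \<in> V - K"
    and ef: "e \<in> nbhd V E a \<inter> nbhd V E b \<inter> K" "f \<in> nbhd V E a \<inter> nbhd V E b \<inter> K" "e \<noteq> f"
    and x: "e \<in> nbhd V E x" "f \<notin> nbhd V E x"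
  shows "nbhd V E a \<inter> nbhd V E x \<inter> K \<subseteq> nbhd V E b \<or> nbhd V E b \<inter> nbhd V E x \<inter> K \<subseteq> nbhd V E a"
proof (rule ccontr)
  assume "\<not> ?thesis"
  then obtain g h where g: "g \<in> nbhd V E a \<inter> nbhd V E x \<inter> K" "g \<notin> nbhd V E b"
    and h: "h \<in> nbhd V E b \<inter> nbhd V E x \<inter> K" "h \<notin> nbhd V E a"
    by blast
  obtain c r \<phi> where on: "\<And>v. v \<in> V \<Longrightarrow> on_circle c r (\<phi> v)"
    and meet: "\<And>u v. E u v \<Longrightarrow> crossing (\<phi> u) (\<phi> v)"
    and miss: "\<And>u v. u \<in> V \<Longrightarrow> v \<in> V \<Longrightarrow> u \<noteq> v \<Longrightarrow> \<not> E u v \<Longrightarrow> \<not> crossing (\<phi> u) (\<phi> v)"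
    using circle_graph_chord_model[OF G] by blast
  have indep: "\<not> E u v" if "u \<in> K" "v \<in> K" for u v
    using K(2) that unfolding independent_def by blast
  have in_K: "e \<in> K" "f \<in> K" "g \<in> K" "h \<in> K"
    using ef g h by auto
  have in_V: "e \<in> V" "f \<in> V" "g \<in> V" "h \<in> V" "a \<in> V" "b \<in> V" "x \<in> V"
    using in_K K(1) abx by auto
  have adjacent: "E a e" "E a f" "E a g" "E b e" "E b f" "E b h" "E x e" "E x g" "E x h"
    using ef g h x unfolding nbhd_def by auto
  have not_adjacent: "\<not> E a h" "\<not> E b g" "\<not> E x f"
    using g h x in_V unfolding nbhd_def by auto
  have distinct: "e \<noteq> g" "e \<noteq> h" "f \<noteq> g" "f \<noteq> h" "g \<noteq> h" "a \<noteq> h" "b \<noteq> g" "x \<noteq> f"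
    using ef g h x abx in_K by auto
  show False
    by (rule four_chords_obstruction[OF on on on on on on on, OF in_V])
      (simp_all add: meet adjacent miss in_V in_K indep not_adjacent distinct ef(3))
qed

lemma exists_pair_with_singleton_common_trace:
  fixes S :: "'a \<Rightarrow> 'b set"
  assumes finite: "\<And>x. x \<in> X \<Longrightarrow> finite (S x)"
    and nested: "\<And>a b x e f. a \<in> X \<Longrightarrow> b \<in> X \<Longrightarrow> x \<in> X \<Longrightarrow> e \<in> S a \<inter> S b \<Longrightarrow>
      f \<in> S a \<inter> S b \<Longrightarrow> e \<noteq> f \<Longrightarrow> e \<in> S x \<Longrightarrow> f \<notin> S x \<Longrightarrow>
      S a \<inter> S x \<subseteq> S b \<or> S b \<inter> S x \<subseteq> S a"
    and separating: "\<And>a b e f. a \<in> X \<Longrightarrow> b \<in> X \<Longrightarrow> e \<in> S a \<inter> S b \<Longrightarrow> f \<in> S a \<inter> S b \<Longrightarrow>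
      e \<noteq> f \<Longrightarrow> \<exists>x\<in>X. (e \<in> S x) \<noteq> (f \<in> S x)"
    and start: "a\<^sub>0 \<in> X" "b\<^sub>0 \<in> X" "a\<^sub>0 \<noteq> b\<^sub>0" "S a\<^sub>0 \<inter> S b\<^sub>0 \<noteq> {}"
  shows "\<exists>a\<in>X. \<exists>b\<in>X. a \<noteq> b \<and> card (S a \<inter> S b) = 1"
proof -
  define pairs where "pairs = {(a, b). a \<in> X \<and> b \<in> X \<and> a \<noteq> b \<and> S a \<inter> S b \<noteq> {}}"
  have "(a\<^sub>0, b\<^sub>0) \<in> pairs"
    using start unfolding pairs_def by blast
  then obtain a b where ab: "(a, b) \<in> pairs"
    and least: "\<And>a' b'. (a', b') \<in> pairs \<Longrightarrow> card (S a \<inter> S b) \<le> card (S a' \<inter> S b')"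
    using ex_has_least_nat[of "\<lambda>p. p \<in> pairs" _ "\<lambda>(a, b). card (S a \<inter> S b)"] by force
  have X: "a \<in> X" "b \<in> X" and "S a \<inter> S b \<noteq> {}"
    using ab unfolding pairs_def by auto
  have no_smaller: False
    if "y \<in> X" "x \<in> X" "y \<noteq> x" "S y \<inter> S x \<noteq> {}" "S y \<inter> S x \<subset> S a \<inter> S b" for x y
  proof -
    have "card (S y \<inter> S x) < card (S a \<inter> S b)"
      using psubset_card_mono[OF _ that(5)] finite X by blast
    moreover have "(y, x) \<in> pairs"
      using that(1-4) unfolding pairs_def by blast
    ultimately show False
      using least[of y x] by linarith
  qed
  have shrink: False
    if "e \<in> S a \<inter> S b" "f \<in> S a \<inter> S b" "e \<noteq> f" "x \<in> X" "e \<in> S x" "f \<notin> S x" for e f x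
    using nested[OF X that(4) that(1-3,5,6)]
      no_smaller[of a x] no_smaller[of b x] that X by blast
  have "card (S a \<inter> S b) = 1"
  proof (rule ccontr)
    assume "card (S a \<inter> S b) \<noteq> 1"
    obtain e where e: "e \<in> S a \<inter> S b"
      using \<open>S a \<inter> S b \<noteq> {}\<close> by blast
    moreover have "S a \<inter> S b \<noteq> {e}"
      using \<open>card (S a \<inter> S b) \<noteq> 1\<close> by auto
    ultimately obtain f where f: "f \<in> S a \<inter> S b" "f \<noteq> e"
      by blast
    show False
      using separating[OF X e f(1) f(2)[symmetric]] shrink[OF e f(1)] shrink[OF f(1) e] f(2) by metis
  qed
  then show ?thesis
    using ab unfolding pairs_def by blast
qed

lemma distinguishing_vertex_if_not_twins:
  assumes G: "simple_graph V E" and K: "K \<subseteq> V" "independent E K"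
    and "e \<in> K" "f \<in> K" "\<not> twins V E e f"
  shows "\<exists>y\<in>V - K. (e \<in> nbhd V E y) \<noteq> (f \<in> nbhd V E y)"
proof -
  have sym: "\<And>u v. E u v \<Longrightarrow> E v u"
    using G unfolding simple_graph_def by blast
  have "\<not> E e f" "\<not> E f e"
    using K(2) assms(4,5) unfolding independent_def by blast+
  then have "nbhd V E e \<noteq> nbhd V E f"
    using assms(6) unfolding twins_def nbhd_def by blast
  then obtain y where "y \<in> V" "E e y \<noteq> E f y"
    unfolding nbhd_def by blast
  moreover have "y \<notin> K"
    using K(2) assms(4,5) \<open>E e y \<noteq> E f y\<close> unfolding independent_def by blast
  ultimately show ?thesis
    using K(1) assms(4,5) sym unfolding nbhd_def by (intro bexI[of _ y]) auto
qed

theorem mainTheorem2: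
  fixes V :: "'a set" and E :: "'a \<Rightarrow> 'a \<Rightarrow> bool" and K :: "'a set"
  assumes "circle_graph V E"
    and "K \<subseteq> V"
    and "independent E K"
    and "\<exists>k\<in>K. card (nbhd V E k) \<ge> 2"
    and "\<forall>u\<in>K. \<forall>v\<in>K. u \<noteq> v \<longrightarrow> \<not> twins V E u v"
  shows "\<exists>a b. a \<in> V - K \<and> b \<in> V - K \<and> a \<noteq> b \<and> card (nbhd V E a \<inter> nbhd V E b \<inter> K) = 1"
proof -
  define S where "S x = nbhd V E x \<inter> K" for x
  have G: "simple_graph V E"
    using assms(1) unfolding circle_graph_def by blast
  obtain k a\<^sub>0 b\<^sub>0 where "k \<in> K" "a\<^sub>0 \<in> nbhd V E k" "b\<^sub>0 \<in> nbhd V E k" "a\<^sub>0 \<noteq> b\<^sub>0"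
    using assms(4) card_le_Suc_iff[of 1] by (auto simp: numeral_2_eq_2 card_le_Suc_iff)
  then have start: "a\<^sub>0 \<in> V - K" "b\<^sub>0 \<in> V - K" "k \<in> S a\<^sub>0 \<inter> S b\<^sub>0"
    using G assms(2,3) unfolding S_def nbhd_def simple_graph_def independent_def by auto
  have "\<exists>a\<in>V - K. \<exists>b\<in>V - K. a \<noteq> b \<and> card (S a \<inter> S b) = 1"
  proof (rule exists_pair_with_singleton_common_trace[OF _ _ _ start(1,2) \<open>a\<^sub>0 \<noteq> b\<^sub>0\<close>])
    show "finite (S x)" for x
      using G unfolding S_def nbhd_def simple_graph_def by simp
    show "S a \<inter> S x \<subseteq> S b \<or> S b \<inter> S x \<subseteq> S a"
      if "a \<in> V - K" "b \<in> V - K" "x \<in> V - K" "e \<in> S a \<inter> S b" "f \<in> S a \<inter> S b" "e \<noteq> f"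
        "e \<in> S x" "f \<notin> S x" for a b x e f
      using circle_graph_nested_traces[OF assms(1-3) that(1-3), of e f] that(4-8)
      unfolding S_def by blast
    show "\<exists>y\<in>V - K. (e \<in> S y) \<noteq> (f \<in> S y)"
      if "e \<in> S a \<inter> S b" "f \<in> S a \<inter> S b" "e \<noteq> f" for a b e f
      using distinguishing_vertex_if_not_twins[OF G assms(2,3)] assms(5) that unfolding S_def by blast
  qed (use start(3) in blast)
  moreover have "S a \<inter> S b = nbhd V E a \<inter> nbhd V E b \<inter> K" for a b
    unfolding S_def by blast
  ultimately show ?thesis
    by auto
qed

end
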